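(* Let $M$ be a $3$-connected matroid with $r(M)\ge 4$, and let $C^*$ and $D^*$ be distinct cocircuits of $M$. Then $r_M(C^*\cup D^* )\ge 4$. *)

theory Defs
  imports Main
begin

definition matroid :: "'a set \<Rightarrow> ('a set \<Rightarrow> bool) \<Rightarrow> bool" where
  "matroid E indep \<longleftrightarrow>
     finite E \<and> indep {} \<and>
     (\<forall>X. indep X \<longrightarrow> X \<subseteq> E) \<and>
     (\<forall>X Y. indep Y \<and> X \<subseteq> Y \<longrightarrow> indep X) \<and>
     (\<forall>X Y. indep X \<and> indep Y \<and> card X < card Y \<longrightarrow> (\<exists>y\<in>Y - X. indep (insert y X)))"

definition mrank :: "('a set \<Rightarrow> bool) \<Rightarrow> 'a set \<Rightarrow> nat" where
  "mrank indep X = Max {card I | I. I \<subseteq> X \<and> indep I}"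

definition basis :: "('a set \<Rightarrow> bool) \<Rightarrow> 'a set \<Rightarrow> bool" where
  "basis indep B \<longleftrightarrow> indep B \<and> (\<forall>B'. indep B' \<and> B \<subseteq> B' \<longrightarrow> B' = B)"

definition circuit :: "'a set \<Rightarrow> ('a set \<Rightarrow> bool) \<Rightarrow> 'a set \<Rightarrow> bool" where
  "circuit E indep C \<longleftrightarrow> C \<subseteq> E \<and> \<not> indep C \<and> (\<forall>D. D \<subset> C \<longrightarrow> indep D)"

definition dual_indep :: "'a set \<Rightarrow> ('a set \<Rightarrow> bool) \<Rightarrow> 'a set \<Rightarrow> bool" where
  "dual_indep E indep X \<longleftrightarrow> X \<subseteq> E \<and> (\<exists>B. basis indep B \<and> X \<inter> B = {})"

definition cocircuit :: "'a set \<Rightarrow> ('a set \<Rightarrow> bool) \<Rightarrow> 'a set \<Rightarrow> bool" where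
  "cocircuit E indep C \<longleftrightarrow> circuit E (dual_indep E indep) C"

definition conn_fn :: "'a set \<Rightarrow> ('a set \<Rightarrow> bool) \<Rightarrow> 'a set \<Rightarrow> int" where
  "conn_fn E indep X = int (mrank indep X) + int (mrank indep (E - X)) - int (mrank indep E)"

definition k_separation :: "'a set \<Rightarrow> ('a set \<Rightarrow> bool) \<Rightarrow> nat \<Rightarrow> 'a set \<Rightarrow> bool" where
  "k_separation E indep k X \<longleftrightarrow>
     X \<subseteq> E \<and> card X \<ge> k \<and> card (E - X) \<ge> k \<and> conn_fn E indep X < int k"

definition n_connected :: "'a set \<Rightarrow> ('a set \<Rightarrow> bool) \<Rightarrow> nat \<Rightarrow> bool" where
  "n_connected E indep n \<longleftrightarrow> (\<forall>k X. 1 \<le> k \<and> k < n \<longrightarrow> \<not> k_separation E indep k X)"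

end

theory Submission
  imports Defs
begin

text \<open>
  The complements E - C and E - D of two distinct cocircuits are distinct hyperplanes, so
  E - (C \<union> D) has rank at most r(M) - 2. Hence if X = C \<union> D had rank at most 3, then
  \<lambda>(X) \<le> 3 + (r(M) - 2) - r(M) = 1, and X (which has at least two elements) would be one side
  of a 2-separation unless |E - X| \<le> 1. In that case r(E - X) \<le> 1 and \<lambda>(X) \<le> 0, which gives a
  1-separation unless X = E; but r(E) \<ge> 4.
\<close>

lemma matroid_finite: "matroid E indep \<Longrightarrow> finite E"
  by (simp add: matroid_def)

lemma matroid_indep_subset: "matroid E indep \<Longrightarrow> indep X \<Longrightarrow> X \<subseteq> E"
  by (simp add: matroid_def)

lemma matroid_indep_empty: "matroid E indep \<Longrightarrow> indep {}"
  by (simp add: matroid_def)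

lemma matroid_augment:
  "matroid E indep \<Longrightarrow> indep X \<Longrightarrow> indep Y \<Longrightarrow> card X < card Y
    \<Longrightarrow> \<exists>y\<in>Y - X. indep (insert y X)"
  unfolding matroid_def by blast

lemma matroid_indep_finite: "matroid E indep \<Longrightarrow> indep X \<Longrightarrow> finite X"
  by (rule finite_subset[OF matroid_indep_subset matroid_finite])

lemma mrank_cards_finite:
  assumes "matroid E indep"
  shows "finite {card I | I. I \<subseteq> X \<and> indep I}"
proof (rule finite_subset)
  show "{card I | I. I \<subseteq> X \<and> indep I} \<subseteq> {..card E}"
  proof
    fix n assume "n \<in> {card I | I. I \<subseteq> X \<and> indep I}"
    then obtain I where "n = card I" "indep I"
      by blast
    then show "n \<in> {..card E}"
      using card_mono[OF matroid_finite[OF assms] matroid_indep_subset[OF assms]] by simp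
  qed
qed simp

lemma card_le_mrank:
  assumes "matroid E indep" "I \<subseteq> X" "indep I"
  shows "card I \<le> mrank indep X"
proof -
  have "card I \<in> {card I | I. I \<subseteq> X \<and> indep I}"
    using assms(2,3) by blast
  then show ?thesis
    unfolding mrank_def using mrank_cards_finite[OF assms(1)] by (rule Max_ge[rotated])
qed

lemma mrank_attained:
  assumes "matroid E indep"
  obtains I where "I \<subseteq> X" "indep I" "card I = mrank indep X"
proof -
  have "{card I | I. I \<subseteq> X \<and> indep I} \<noteq> {}"
    using matroid_indep_empty[OF assms] by blast
  then have "mrank indep X \<in> {card I | I. I \<subseteq> X \<and> indep I}"
    unfolding mrank_def using mrank_cards_finite[OF assms] by (intro Max_in)
  then obtain I where "I \<subseteq> X" "indep I" "mrank indep X = card I"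
    by blast
  then show ?thesis
    using that by simp
qed

lemma mrank_le_card:
  assumes "matroid E indep" "finite X"
  shows "mrank indep X \<le> card X"
proof -
  obtain I where "I \<subseteq> X" "card I = mrank indep X"
    using mrank_attained[OF assms(1)] .
  then show ?thesis
    using card_mono[OF assms(2), of I] by simp
qed

lemma mrank_mono:
  assumes "matroid E indep" "X \<subseteq> Y"
  shows "mrank indep X \<le> mrank indep Y"
proof -
  obtain I where "I \<subseteq> X" "indep I" "card I = mrank indep X"
    using mrank_attained[OF assms(1)] .
  then show ?thesis
    using card_le_mrank[OF assms(1), of I Y] assms(2) by simp
qed

lemma basis_iff_card_eq_mrank:
  assumes "matroid E indep"
  shows "basis indep B \<longleftrightarrow> indep B \<and> card B = mrank indep E"
proof
  assume B: "basis indep B"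
  then have "indep B"
    by (simp add: basis_def)
  moreover have "card B \<ge> mrank indep E"
  proof (rule ccontr)
    assume "\<not> ?thesis"
    moreover obtain J where "J \<subseteq> E" "indep J" "card J = mrank indep E"
      using mrank_attained[OF assms] .
    ultimately obtain y where "y \<in> J - B" "indep (insert y B)"
      using matroid_augment[OF assms \<open>indep B\<close>] by (metis not_le)
    then show False
      using B unfolding basis_def by blast
  qed
  ultimately show "indep B \<and> card B = mrank indep E"
    using card_le_mrank[OF assms matroid_indep_subset[OF assms]] le_antisym by blast
next
  assume B: "indep B \<and> card B = mrank indep E"
  have "B' = B" if "indep B'" "B \<subseteq> B'" for B'
  proof -
    have "card B' \<le> card B"
      using B that card_le_mrank[OF assms matroid_indep_subset[OF assms]] by metis
    then show ?thesis
      using that card_subset_eq matroid_indep_finite[OF assms] by (metis card_mono le_antisym)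
  qed
  then show "basis indep B"
    using B unfolding basis_def by blast
qed

lemma cocircuit_subset: "cocircuit E indep C \<Longrightarrow> C \<subseteq> E"
  unfolding cocircuit_def circuit_def by blast

lemma cocircuit_meets_basis:
  assumes "cocircuit E indep C" "basis indep B"
  shows "C \<inter> B \<noteq> {}"
  using assms unfolding cocircuit_def circuit_def dual_indep_def by blast

lemma cocircuit_minus_point_avoids_basis:
  assumes "cocircuit E indep C" "e \<in> C"
  obtains B where "basis indep B" "B \<inter> (C - {e}) = {}"
proof -
  have "dual_indep E indep (C - {e})"
    using assms unfolding cocircuit_def circuit_def by blast
  then show ?thesis
    using that unfolding dual_indep_def by blast
qed

lemma cocircuit_not_subset:
  assumes "cocircuit E indep C" "cocircuit E indep D" "C \<noteq> D"
  obtains e where "e \<in> C" "e \<notin> D"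
proof -
  have "\<not> C \<subset> D"
    using assms(1,2) unfolding cocircuit_def circuit_def by blast
  then show ?thesis
    using that assms(3) by blast
qed

lemma two_le_card_Un_cocircuits:
  assumes "matroid E indep" "cocircuit E indep C" "cocircuit E indep D" "C \<noteq> D"
  shows "2 \<le> card (C \<union> D)"
proof -
  obtain e f where "e \<in> C" "e \<notin> D" "f \<in> D" "f \<notin> C"
    using cocircuit_not_subset[OF assms(2-4)] cocircuit_not_subset[OF assms(3,2)] assms(4) by metis
  then have "{e, f} \<subseteq> C \<union> D" "e \<noteq> f"
    by auto
  moreover have "finite (C \<union> D)"
    using cocircuit_subset[OF assms(2)] cocircuit_subset[OF assms(3)] matroid_finite[OF assms(1)]
    by (simp add: finite_subset)
  ultimately show ?thesis
    using card_mono[of "C \<union> D" "{e, f}"] by simp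
qed

lemma mrank_Diff_cocircuit_less:
  assumes "matroid E indep" "cocircuit E indep C"
  shows "mrank indep (E - C) < mrank indep E"
proof (rule ccontr)
  assume "\<not> ?thesis"
  then have "mrank indep (E - C) = mrank indep E"
    using mrank_mono[OF assms(1), of "E - C" E] by simp
  moreover obtain I where "I \<subseteq> E - C" "indep I" "card I = mrank indep (E - C)"
    using mrank_attained[OF assms(1)] .
  ultimately have "basis indep I" "C \<inter> I = {}"
    using basis_iff_card_eq_mrank[OF assms(1)] by auto
  then show False
    using cocircuit_meets_basis[OF assms(2)] by blast
qed

text \<open>
  Otherwise a maximum independent subset I of E - (C \<union> D) has r(M) - 1 elements. Augment it
  from a basis contained in (E - C) \<union> {e} with e \<in> C - D: the new element is either e, and
  then I + e lies in E - D, or it lies outside C. Either way an independent set of size r(M)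
  sits inside the complement of a cocircuit.
\<close>
lemma mrank_Diff_Un_cocircuits:
  assumes m: "matroid E indep"
    and C: "cocircuit E indep C" and D: "cocircuit E indep D" and "C \<noteq> D"
  shows "mrank indep (E - (C \<union> D)) + 2 \<le> mrank indep E"
proof (rule ccontr)
  assume "\<not> ?thesis"
  obtain I where I: "I \<subseteq> E - (C \<union> D)" "indep I" "card I = mrank indep (E - (C \<union> D))"
    using mrank_attained[OF m] .
  have "card I \<le> mrank indep (E - C)"
    by (rule card_le_mrank[OF m _ I(2)]) (use I(1) in blast)
  with \<open>\<not> ?thesis\<close> I(3) mrank_Diff_cocircuit_less[OF m C]
  have card_I: "card I + 1 = mrank indep E"
    by linarith
  obtain e where e: "e \<in> C" "e \<notin> D"
    using cocircuit_not_subset[OF C D \<open>C \<noteq> D\<close>] .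
  obtain B where B: "basis indep B" "B \<inter> (C - {e}) = {}"
    using cocircuit_minus_point_avoids_basis[OF C e(1)] .
  have "indep B" "card I < card B"
    using B(1) card_I basis_iff_card_eq_mrank[OF m] by auto
  then obtain y where y: "y \<in> B - I" "indep (insert y I)"
    using matroid_augment[OF m I(2)] by blast
  have card_yI: "card (insert y I) = mrank indep E"
    using y card_I matroid_indep_finite[OF m I(2)] by simp
  have "y \<in> E"
    using matroid_indep_subset[OF m y(2)] by blast
  show False
  proof (cases "y = e")
    case True
    then have "insert y I \<subseteq> E - D"
      using I(1) e(2) \<open>y \<in> E\<close> by blast
    then have "card (insert y I) \<le> mrank indep (E - D)"
      by (rule card_le_mrank[OF m _ y(2)])
    with card_yI mrank_Diff_cocircuit_less[OF m D] show False
      by linarith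
  next
    case False
    then have "insert y I \<subseteq> E - C"
      using I(1) B(2) y(1) \<open>y \<in> E\<close> by blast
    then have "card (insert y I) \<le> mrank indep (E - C)"
      by (rule card_le_mrank[OF m _ y(2)])
    with card_yI mrank_Diff_cocircuit_less[OF m C] show False
      by linarith
  qed
qed

lemma n_connected_small_side:
  assumes "n_connected E indep n" "1 \<le> k" "k < n" "X \<subseteq> E" "k \<le> card X"
    and "conn_fn E indep X < int k"
  shows "card (E - X) < k"
proof (rule ccontr)
  assume "\<not> card (E - X) < k"
  then have "k_separation E indep k X"
    using assms(4-6) unfolding k_separation_def by simp
  then show False
    using assms(1-3) unfolding n_connected_def by blast
qed

theorem lemma3p4:
  fixes E :: "'a set" and indep :: "'a set \<Rightarrow> bool" and Cs Ds :: "'a set"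
  assumes "matroid E indep"
    and "n_connected E indep 3"
    and "mrank indep E \<ge> 4"
    and "cocircuit E indep Cs" and "cocircuit E indep Ds"
    and "Cs \<noteq> Ds"
  shows "mrank indep (Cs \<union> Ds) \<ge> 4"
proof (rule ccontr)
  assume small: "\<not> ?thesis"
  define X where "X = Cs \<union> Ds"
  have X: "X \<subseteq> E" "finite E"
    using cocircuit_subset[OF assms(4)] cocircuit_subset[OF assms(5)] matroid_finite[OF assms(1)]
    unfolding X_def by auto
  have card_X: "2 \<le> card X"
    using two_le_card_Un_cocircuits[OF assms(1,4-6)] by (simp add: X_def)
  have rank_X: "mrank indep X \<le> 3"
    using small by (simp add: X_def)
  have rank_compl: "mrank indep (E - X) + 2 \<le> mrank indep E"
    using mrank_Diff_Un_cocircuits[OF assms(1,4-6)] by (simp add: X_def)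
  then have "conn_fn E indep X < 2"
    using rank_X unfolding conn_fn_def by linarith
  then have "card (E - X) < 2"
    using n_connected_small_side[OF assms(2), of 2 X] X card_X by simp
  then have "mrank indep (E - X) \<le> 1"
    using mrank_le_card[OF assms(1) finite_Diff[OF X(2), of X]] by linarith
  then have "conn_fn E indep X < 1"
    using rank_X assms(3) unfolding conn_fn_def by linarith
  then have "E - X = {}"
    using n_connected_small_side[OF assms(2), of 1 X] X card_X by simp
  then have "X = E"
    using X by blast
  then show False
    using small assms(3) by (simp add: X_def)
qed

end
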